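(* With $\tilde h_n(q)=q^{n(n-1)/2}h_n(q^{-1})$, one has, as formal power series in $s$, $$\sum_{n\ge0}\tilde h_n(q)s^n=\cfrac{1}{1-\cfrac{c_1 s}{1-\cfrac{c_2 s}{1-\cfrac{c_3 s}{1-\cdots}}}},$$ where $c_{2m-1}=\binom{m+1}{2}_q$ and $c_{2m}=q\binom{m+1}{2}_q$ for $m\ge1$; explicitly $$\sum_{n\ge 0}\tilde h_n(q)s^n=\cfrac{1}{1-\cfrac{s}{1-\cfrac{qs}{1-\cfrac{\binom{3}{2}_q s}{1-\cfrac{q\binom{3}{2}_q s}{1-\cfrac{\binom{4}{2}_q s}{1-\cfrac{q\binom{4}{2}_q s}{1-\cdots}}}}}}}.$$
   Context: Gaussian binomial coefficients: for $m\ge k\ge 0$, $\binom{m}{k}_q=\frac{[m]_q!}{[k]_q!\,[m-k]_q!}$ with $[m]_q!=\prod_{i=1}^m\frac{1-q^i}{1-q}$; set $\binom{m}{k}_q=0$ if $k>m$ or $k<0$. Let $W$ be an $n$-dimensional complex vector space with basis $w_1,\dots,w_n$, and $pr_k:W\to W$ the projection with $pr_k(\sum_i c_iw_i)=\sum_{i\ne k}c_iw_i$. The degenerate flag variety $\mathrm{Fl}^a_n$ is the variety of tuples $(V_1,\dots,V_{n-1})$ of subspaces of $W$ with $\dim V_k=k$ and $pr_{k+1}V_k\subset V_{k+1}$ for $k=1,\dots,n-2$. It admits a cellular decomposition into complex affine cells, so its Poincaré polynomial $P(t)$ involves only even powers of $t$; define $h_n(q)=P(q^{1/2})$, a polynomial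 of degree $n(n-1)/2$ with $h_0(q)=h_1(q)=1$. It is known (Cerulli Irelli–Feigin–Reineke) that $$h_n(q)=\sum_{f_1,\dots,f_{n-1}\ge 0} q^{\sum_{k=1}^{n-1}(k-f_k)(1-f_k+f_{k+1})}\prod_{k=1}^{n-1}\binom{1+f_{k-1}}{f_k}_{\!q}\prod_{k=1}^{n-1}\binom{1+f_{k+1}}{f_k}_{\!q},$$ with the convention $f_0=f_n=0$. *)

theory Defs
  imports "HOL-Computational_Algebra.Computational_Algebra"
begin

definition qint :: "nat \<Rightarrow> complex poly" where
  "qint i = (\<Sum>j<i. monom 1 j)"

definition qfact :: "nat \<Rightarrow> complex poly" where
  "qfact m = (\<Prod>i=1..m. qint i)"

text \<open>Gaussian binomial coefficient as a polynomial in q (exact polynomial quotient).\<close>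
definition qbinom :: "nat \<Rightarrow> nat \<Rightarrow> complex poly" where
  "qbinom m k = (if k \<le> m then qfact m div (qfact k * qfact (m - k)) else 0)"

text \<open>Terms with some f_k > n vanish (f_k \<le> 1 + f_{k-1} forces f_k \<le> k), so the box
  f_k \<le> n carries the whole (finite) support of the sum.\<close>
definition fset :: "nat \<Rightarrow> (nat \<Rightarrow> nat) set" where
  "fset n = {f. (\<forall>k. (k < 1 \<or> k > n - 1) \<longrightarrow> f k = 0) \<and> (\<forall>k. f k \<le> n)}"

text \<open>h_n(q) evaluated at a nonzero complex number q (Cerulli Irelli--Feigin--Reineke formula).\<close>
definition h :: "nat \<Rightarrow> complex \<Rightarrow> complex" where
  "h n q = (\<Sum>f\<in>fset n.
      q powi (\<Sum>k=1..n-1. (int k - int (f k)) * (1 - int (f k) + int (f (k+1))))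
      * (\<Prod>k=1..n-1. poly (qbinom (1 + f (k-1)) (f k)) q)
      * (\<Prod>k=1..n-1. poly (qbinom (1 + f (k+1)) (f k)) q))"

definition htilde :: "nat \<Rightarrow> complex \<Rightarrow> complex" where
  "htilde n q = q ^ (n * (n - 1) div 2) * h n (inverse q)"

text \<open>c_{2m-1} = binom(m+1,2)_q, c_{2m} = q binom(m+1,2)_q (m \<ge> 1).\<close>
definition cfc :: "nat \<Rightarrow> complex \<Rightarrow> complex" where
  "cfc j q = (if odd j then poly (qbinom ((j + 1) div 2 + 1) 2) q
              else q * poly (qbinom (j div 2 + 1) 2) q)"

fun cf :: "complex \<Rightarrow> nat \<Rightarrow> nat \<Rightarrow> complex fps" where
  "cf q k 0 = 1"
| "cf q k (Suc N) = inverse (1 - fps_const (cfc k q) * fps_X * cf q (Suc k) N)"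

end

theory Submission
  imports Defs
begin

text \<open>
  After the reversal \<open>q \<mapsto> q\<inverse>\<close>, each summand of the Cerulli Irelli--Feigin--Reineke
  formula becomes a product of weights of the single steps \<open>f k \<rightarrow> f (k+1)\<close>, and these weights
  vanish unless \<open>|f k - f (k+1)| \<le> 1\<close>.  Hence \<open>h\<^sup>~\<^sub>n(q)\<close> is a weighted count of Motzkin
  paths of length n, and the theorem is an instance of Flajolet's correspondence between
  path sums and continued fractions.
\<close>

section \<open>Weighted Motzkin paths and Jacobi continued fractions\<close>

definition tridiagonal :: "(nat \<Rightarrow> nat \<Rightarrow> 'a::zero) \<Rightarrow> bool" where
  "tridiagonal wt \<longleftrightarrow> (\<forall>a b. Suc a < b \<or> Suc b < a \<longrightarrow> wt a b = 0)"

definition paths :: "nat \<Rightarrow> nat \<Rightarrow> (nat \<Rightarrow> nat) set" where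
  "paths n m = {f. f 0 = 0 \<and> (\<forall>k>n. f k = 0) \<and> (\<forall>k. f k \<le> m)}"

definition path_weight :: "(nat \<Rightarrow> nat \<Rightarrow> 'a::comm_ring_1) \<Rightarrow> nat \<Rightarrow> (nat \<Rightarrow> nat) \<Rightarrow> 'a" where
  "path_weight wt n f = (\<Prod>k<n. wt (f k) (f (Suc k)))"

definition path_sum :: "(nat \<Rightarrow> nat \<Rightarrow> 'a::comm_ring_1) \<Rightarrow> nat \<Rightarrow> nat \<Rightarrow> nat \<Rightarrow> 'a" where
  "path_sum wt m n b = (\<Sum>f\<in>{f \<in> paths n m. f n = b}. path_weight wt n f)"

text \<open>The same quantity computed step by step (a transfer-matrix recursion), for paths that
  start at height l, never go below l and take only steps of size at most one.\<close>
fun walk :: "(nat \<Rightarrow> nat \<Rightarrow> 'a::comm_ring_1) \<Rightarrow> nat \<Rightarrow> nat \<Rightarrow> nat \<Rightarrow> 'a" where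
  "walk wt l 0 b = (if b = l then 1 else 0)"
| "walk wt l (Suc n) b = (if b < l then 0 else
      (if b > 0 then walk wt l n (b - 1) * wt (b - 1) b else 0)
      + walk wt l n b * wt b b + walk wt l n (Suc b) * wt (Suc b) b)"

lemma walk_below: "b < l \<Longrightarrow> walk wt l n b = 0"
  by (cases n) auto

lemma walk_above: "b > l + n \<Longrightarrow> walk wt l n b = 0"
  by (induction n arbitrary: b) auto

lemma paths_0: "paths 0 m = {\<lambda>_. 0}"
  unfolding paths_def by (auto simp: fun_eq_iff) (metis neq0_conv)

lemma paths_Suc_end:
  assumes "b \<le> m"
  shows "{f \<in> paths (Suc n) m. f (Suc n) = b} = (\<lambda>g. g(Suc n := b)) ` paths n m"
proof
  show "{f \<in> paths (Suc n) m. f (Suc n) = b} \<subseteq> (\<lambda>g. g(Suc n := b)) ` paths n m"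
  proof
    fix f assume f: "f \<in> {f \<in> paths (Suc n) m. f (Suc n) = b}"
    then have "f = (f(Suc n := 0))(Suc n := b)" by auto
    moreover have "f(Suc n := 0) \<in> paths n m" using f unfolding paths_def by auto
    ultimately show "f \<in> (\<lambda>g. g(Suc n := b)) ` paths n m" by blast
  qed
  show "(\<lambda>g. g(Suc n := b)) ` paths n m \<subseteq> {f \<in> paths (Suc n) m. f (Suc n) = b}"
    using assms unfolding paths_def by auto
qed

lemma finite_paths: "finite (paths n m)"
proof (induction n)
  case 0
  then show ?case by (simp add: paths_0)
next
  case (Suc n)
  have "paths (Suc n) m \<subseteq> (\<Union>b\<le>m. {f \<in> paths (Suc n) m. f (Suc n) = b})"
    by (auto simp: paths_def)
  also have "\<dots> = (\<Union>b\<le>m. (\<lambda>g. g(Suc n := b)) ` paths n m)"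
    by (simp add: paths_Suc_end)
  finally show ?case
    by (rule finite_subset) (use Suc.IH in auto)
qed

lemma path_sum_Suc:
  assumes "b \<le> m"
  shows "path_sum wt m (Suc n) b = (\<Sum>a\<le>m. path_sum wt m n a * wt a b)"
proof -
  have inj: "inj_on (\<lambda>g. g(Suc n := b)) (paths n m)"
  proof (rule inj_onI)
    fix g g' assume "g \<in> paths n m" "g' \<in> paths n m" "g(Suc n := b) = g'(Suc n := b)"
    then show "g = g'" unfolding paths_def by (auto simp: fun_eq_iff) (metis lessI)
  qed
  have extend: "path_weight wt (Suc n) (g(Suc n := b)) = path_weight wt n g * wt (g n) b" for g
  proof -
    have "(\<Prod>k<n. wt ((g(Suc n := b)) k) ((g(Suc n := b)) (Suc k))) = path_weight wt n g"
      unfolding path_weight_def by (rule prod.cong) auto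
    then show ?thesis by (simp add: path_weight_def)
  qed
  have "path_sum wt m (Suc n) b = (\<Sum>g\<in>paths n m. path_weight wt n g * wt (g n) b)"
    unfolding path_sum_def paths_Suc_end[OF assms] by (simp add: sum.reindex[OF inj] extend)
  also have "\<dots> = (\<Sum>a\<le>m. \<Sum>g\<in>{g \<in> paths n m. g n = a}. path_weight wt n g * wt (g n) b)"
    using finite_paths by (intro sum.group[symmetric]) (auto simp: paths_def)
  also have "\<dots> = (\<Sum>a\<le>m. path_sum wt m n a * wt a b)"
    unfolding path_sum_def by (rule sum.cong) (auto simp: sum_distrib_right)
  finally show ?thesis .
qed

lemma walk_step_sum:
  assumes wt: "tridiagonal wt" and "l + n < m" "b \<le> m"
  shows "(\<Sum>a\<le>m. walk wt l n a * wt a b) =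
    (if b > 0 then walk wt l n (b - 1) * wt (b - 1) b else 0)
    + walk wt l n b * wt b b + walk wt l n (Suc b) * wt (Suc b) b"
proof -
  define g where "g a = walk wt l n a * wt a b" for a
  define S where "S = (if b = 0 then {b, Suc b} else {b - 1, b, Suc b})"
  have "(\<Sum>a\<le>m. g a) = (\<Sum>a\<le>Suc m. g a)"
    using assms by (simp add: g_def walk_above)
  also have "\<dots> = (\<Sum>a\<in>S. g a)"
  proof (rule sum.mono_neutral_right)
    show "S \<subseteq> {..Suc m}" using assms by (auto simp: S_def)
    show "\<forall>a\<in>{..Suc m} - S. g a = 0"
    proof
      fix a assume "a \<in> {..Suc m} - S"
      then have "Suc a < b \<or> Suc b < a" by (auto simp: S_def split: if_splits)
      then show "g a = 0" using wt by (auto simp: g_def tridiagonal_def)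
    qed
  qed simp
  also have "\<dots> = (if b > 0 then g (b - 1) else 0) + g b + g (Suc b)"
    by (cases b) (auto simp: S_def)
  finally show ?thesis unfolding g_def .
qed

text \<open>For tridiagonal weights, paths of height at most m and length at most m never feel the
  height bound, so the path sum is computed by the step-by-step recursion.\<close>
lemma path_sum_eq_walk:
  assumes "tridiagonal wt" "n \<le> m" "b \<le> m"
  shows "path_sum wt m n b = walk wt 0 n b"
  using assms(2,3)
proof (induction n arbitrary: b)
  case 0
  have "{f \<in> paths 0 m. f 0 = b} = (if b = 0 then {\<lambda>_. 0} else {})"
    by (auto simp: paths_0)
  then show ?case by (simp add: path_sum_def path_weight_def)
next
  case (Suc n)
  have "path_sum wt m (Suc n) b = (\<Sum>a\<le>m. path_sum wt m n a * wt a b)"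
    by (rule path_sum_Suc[OF Suc.prems(2)])
  also have "\<dots> = (\<Sum>a\<le>m. walk wt 0 n a * wt a b)"
    by (rule sum.cong) (use Suc in auto)
  also have "\<dots> = walk wt 0 (Suc n) b"
    using walk_step_sum[OF assms(1), of 0 n m b] Suc.prems by simp
  finally show ?case .
qed

text \<open>First-return decomposition: a walk from l to a point above l is an excursion from l to l,
  an up step \<open>l \<rightarrow> l+1\<close>, and a walk staying at least at \<open>l+1\<close>.\<close>
lemma walk_last_return:
  "l < a \<Longrightarrow> walk wt l (Suc n) a = (\<Sum>j\<le>n. walk wt l j l * wt l (Suc l) * walk wt (Suc l) (n - j) a)"
proof (induction n arbitrary: a)
  case 0
  then show ?case by (cases "a = Suc l") auto
next
  case (Suc n)
  note a = Suc.prems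
  define R where "R i b = walk wt (Suc l) i b" for i b
  define E where "E j = walk wt l j l * wt l (Suc l)" for j
  have step: "walk wt l' (Suc i) b = walk wt l' i (b - 1) * wt (b - 1) b + walk wt l' i b * wt b b
      + walk wt l' i (Suc b) * wt (Suc b) b" if "l' \<le> b" "0 < b" for l' i b
    using that by simp
  have IH: "walk wt l (Suc n) b = (\<Sum>j\<le>n. E j * R (n - j) b)" if "l < b" for b
    using Suc.IH[OF that] by (simp add: E_def R_def mult.assoc)
  have R_step: "R (Suc i) a = R i (a - 1) * wt (a - 1) a + R i a * wt a a + R i (Suc a) * wt (Suc a) a" for i
    unfolding R_def using a by (intro step) auto
  have down: "(\<Sum>j\<le>n. E j * R (n - j) (a - 1)) * wt (a - 1) a + E (Suc n) * R 0 a
      = walk wt l (Suc n) (a - 1) * wt (a - 1) a"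
  proof (cases "a = Suc l")
    case True
    then show ?thesis by (simp add: E_def R_def walk_below)
  next
    case False
    then show ?thesis using a IH[of "a - 1"] by (simp add: R_def)
  qed
  have "(\<Sum>j\<le>Suc n. E j * R (Suc n - j) a)
      = (\<Sum>j\<le>n. E j * R (Suc (n - j)) a) + E (Suc n) * R 0 a"
    by (simp add: Suc_diff_le)
  also have "(\<Sum>j\<le>n. E j * R (Suc (n - j)) a)
      = (\<Sum>j\<le>n. E j * R (n - j) (a - 1)) * wt (a - 1) a
        + walk wt l (Suc n) a * wt a a + walk wt l (Suc n) (Suc a) * wt (Suc a) a"
    unfolding R_step IH[OF a] IH[of "Suc a", OF less_SucI[OF a]]
    by (simp add: sum.distrib sum_distrib_left sum_distrib_right distrib_left mult_ac del: walk.simps)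
  finally have "(\<Sum>j\<le>Suc n. E j * R (Suc n - j) a)
      = walk wt l (Suc n) (a - 1) * wt (a - 1) a + walk wt l (Suc n) a * wt a a
        + walk wt l (Suc n) (Suc a) * wt (Suc a) a"
    unfolding down[symmetric] by (simp only: ac_simps)
  then show ?case
    using a step[of l a "Suc n"] by (simp add: E_def R_def mult.assoc del: walk.simps)
qed

definition motzkin :: "(nat \<Rightarrow> nat \<Rightarrow> 'a::comm_ring_1) \<Rightarrow> nat \<Rightarrow> 'a fps" where
  "motzkin wt l = Abs_fps (\<lambda>n. walk wt l n l)"

lemma motzkin_rec:
  "motzkin wt l = 1 + fps_const (wt l l) * (fps_X * motzkin wt l)
     + fps_const (wt (Suc l) l * wt l (Suc l)) * (fps_X\<^sup>2 * (motzkin wt l * motzkin wt (Suc l)))"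
proof (rule fps_ext)
  fix n
  have diag: "walk wt l (Suc i) l = walk wt l i l * wt l l + walk wt l i (Suc l) * wt (Suc l) l" for i
    by (simp add: walk_below)
  have excursions: "walk wt l (Suc i) (Suc l) = wt l (Suc l) * (motzkin wt l * motzkin wt (Suc l)) $ i" for i
    using walk_last_return[of l "Suc l" wt i]
    by (simp add: motzkin_def fps_mult_nth atLeast0AtMost sum_distrib_left algebra_simps
        del: walk.simps(2))
  consider "n = 0" | "n = 1" | i where "n = Suc (Suc i)"
    by (metis One_nat_def not0_implies_Suc)
  then show "motzkin wt l $ n = (1 + fps_const (wt l l) * (fps_X * motzkin wt l)
     + fps_const (wt (Suc l) l * wt l (Suc l)) * (fps_X\<^sup>2 * (motzkin wt l * motzkin wt (Suc l)))) $ n"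
  proof cases
    case 3
    have "(1 + fps_const (wt l l) * (fps_X * motzkin wt l)
        + fps_const (wt (Suc l) l * wt l (Suc l)) * (fps_X\<^sup>2 * (motzkin wt l * motzkin wt (Suc l)))) $ n
      = wt l l * motzkin wt l $ Suc i
        + wt (Suc l) l * wt l (Suc l) * (motzkin wt l * motzkin wt (Suc l)) $ i"
      using 3 by (simp add: fps_X_power_mult_nth del: fps_mult_nth)
    then show ?thesis
      using 3 by (simp add: motzkin_def diag excursions mult_ac del: walk.simps(2) fps_mult_nth)
  qed (simp_all add: motzkin_def fps_X_power_mult_nth diag del: walk.simps(2))
qed

text \<open>The Jacobi recursion has at most one solution: the difference D of two solutions satisfies
  a homogeneous recursion whose n-th coefficient only involves lower coefficients of D.\<close>
lemma jacobi_difference_zero: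
  fixes D :: "nat \<Rightarrow> 'a::comm_ring_1 fps"
  assumes "\<And>l. D l = fps_const (b l) * (fps_X * D l)
             + fps_const (lam l) * (fps_X\<^sup>2 * (D l * A l + B l * D (Suc l)))"
  shows "D l $ n = 0"
proof (induction n arbitrary: l rule: less_induct)
  case (less n)
  have "(D l * A l) $ m = 0" "(B l * D (Suc l)) $ m = 0" if "m < n" for m
    unfolding fps_mult_nth by (rule sum.neutral; use that less in auto)+
  then show ?case
    using less by (subst assms) (simp add: fps_X_power_mult_nth)
qed

lemma jacobi_unique:
  fixes M N :: "nat \<Rightarrow> 'a::comm_ring_1 fps"
  assumes M: "\<And>l. M l = 1 + fps_const (b l) * (fps_X * M l) + fps_const (lam l) * (fps_X\<^sup>2 * (M l * M (Suc l)))"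
      and N: "\<And>l. N l = 1 + fps_const (b l) * (fps_X * N l) + fps_const (lam l) * (fps_X\<^sup>2 * (N l * N (Suc l)))"
  shows "M l = N l"
proof -
  define D where "D l = M l - N l" for l
  have "D l = fps_const (b l) * (fps_X * D l)
      + fps_const (lam l) * (fps_X\<^sup>2 * (D l * M (Suc l) + N l * D (Suc l)))" for l
  proof -
    have "D l = (1 + fps_const (b l) * (fps_X * M l) + fps_const (lam l) * (fps_X\<^sup>2 * (M l * M (Suc l))))
        - (1 + fps_const (b l) * (fps_X * N l) + fps_const (lam l) * (fps_X\<^sup>2 * (N l * N (Suc l))))"
      unfolding D_def by (subst M, subst N) (rule refl)
    then show ?thesis by (simp add: D_def algebra_simps)
  qed
  then have "D l $ n = 0" for n
    by (rule jacobi_difference_zero)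
  then show ?thesis by (simp add: D_def fps_eq_iff)
qed

section \<open>Stieltjes continued fractions and their even contraction\<close>

text \<open>Coefficients of the Stieltjes continued fraction \<open>F_k = 1/(1 - c_k X F_k+1)\<close>, defined through
  the equivalent recursion \<open>F_k = 1 + c_k X F_k+1 F_k\<close>, which determines each coefficient
  from lower ones.\<close>
fun stieltjes_coeff :: "(nat \<Rightarrow> 'a::comm_ring_1) \<Rightarrow> nat \<Rightarrow> nat \<Rightarrow> 'a" where
  "stieltjes_coeff c k 0 = 1"
| "stieltjes_coeff c k (Suc n) = c k * (\<Sum>j\<le>n. stieltjes_coeff c (Suc k) j * stieltjes_coeff c k (n - j))"

definition stieltjes :: "(nat \<Rightarrow> 'a::comm_ring_1) \<Rightarrow> nat \<Rightarrow> 'a fps" where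
  "stieltjes c k = Abs_fps (stieltjes_coeff c k)"

lemma stieltjes_rec: "stieltjes c k = 1 + fps_const (c k) * (fps_X * (stieltjes c (Suc k) * stieltjes c k))"
proof (rule fps_ext)
  fix n
  have "(stieltjes c (Suc k) * stieltjes c k) $ m
      = (\<Sum>j\<le>m. stieltjes_coeff c (Suc k) j * stieltjes_coeff c k (m - j))" for m
    by (simp add: stieltjes_def fps_mult_nth atLeast0AtMost)
  then show "stieltjes c k $ n = (1 + fps_const (c k) * (fps_X * (stieltjes c (Suc k) * stieltjes c k))) $ n"
    by (cases n) (simp_all add: stieltjes_def del: fps_mult_nth)
qed

lemma stieltjes_start: "c 0 = 0 \<Longrightarrow> stieltjes c 0 = 1"
  using stieltjes_rec[of c 0] by simp

lemma stieltjes_inverse: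
  fixes c :: "nat \<Rightarrow> 'a::field"
  shows "stieltjes c k = inverse (1 - fps_const (c k) * fps_X * stieltjes c (Suc k))"
proof -
  have "(1 - fps_const (c k) * fps_X * stieltjes c (Suc k)) * stieltjes c k
      = stieltjes c k - fps_const (c k) * (fps_X * (stieltjes c (Suc k) * stieltjes c k))"
    by (simp add: algebra_simps)
  also have "\<dots> = 1"
    by (subst (1) stieltjes_rec) simp
  finally show ?thesis
    by (rule fps_inverse_unique[symmetric])
qed

lemma contraction_identity:
  fixes F0 F1 F2 F3 X a b c :: "'a::comm_ring_1"
  assumes "F0 = 1 + a * (X * (F1 * F0))" "F1 = 1 + b * (X * (F2 * F1))" "F2 = 1 + c * (X * (F3 * F2))"
  shows "F0 * F1 = 1 + (a + b) * (X * (F0 * F1)) + (b * c) * (X\<^sup>2 * ((F0 * F1) * (F2 * F3)))"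
proof -
  have "F0 * F1 - (1 + (a + b) * (X * (F0 * F1)) + (b * c) * (X\<^sup>2 * ((F0 * F1) * (F2 * F3))))
    = (F0 - (1 + a * (X * (F1 * F0)))) + F0 * (F1 - (1 + b * (X * (F2 * F1))))
      + b * X * F0 * F1 * (F2 - (1 + c * (X * (F3 * F2))))"
    by (simp add: algebra_simps power2_eq_square)
  also have "\<dots> = 0"
    using assms by simp
  finally show ?thesis by simp
qed

lemma motzkin_eq_stieltjes:
  assumes level: "\<And>l. wt l l = c (2 * l) + c (Suc (2 * l))"
      and loop: "\<And>l. wt (Suc l) l * wt l (Suc l) = c (Suc (2 * l)) * c (Suc (Suc (2 * l)))"
  shows "motzkin wt l = stieltjes c (2 * l) * stieltjes c (Suc (2 * l))"
proof (rule jacobi_unique[where M = "motzkin wt" and N = "\<lambda>l. stieltjes c (2 * l) * stieltjes c (Suc (2 * l))"])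
  show "motzkin wt l = 1 + fps_const (wt l l) * (fps_X * motzkin wt l)
      + fps_const (wt (Suc l) l * wt l (Suc l)) * (fps_X\<^sup>2 * (motzkin wt l * motzkin wt (Suc l)))" for l
    by (rule motzkin_rec)
  show "stieltjes c (2 * l) * stieltjes c (Suc (2 * l))
      = 1 + fps_const (wt l l) * (fps_X * (stieltjes c (2 * l) * stieltjes c (Suc (2 * l))))
        + fps_const (wt (Suc l) l * wt l (Suc l))
          * (fps_X\<^sup>2 * (stieltjes c (2 * l) * stieltjes c (Suc (2 * l))
                          * (stieltjes c (2 * Suc l) * stieltjes c (Suc (2 * Suc l)))))" for l
    unfolding level loop
    using contraction_identity[OF stieltjes_rec stieltjes_rec stieltjes_rec, of c "2 * l"] by simp
qed

section \<open>Agreement of inverses of power series\<close>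

text \<open>Truncations of a continued fraction converge coefficientwise, because inversion of power
  series with invertible constant term preserves agreement of the first coefficients.\<close>
lemma fps_mult_nth_vanishing:
  fixes a u :: "'a::comm_ring_1 fps"
  assumes "\<forall>j\<le>n. a $ j = 0" "i \<le> n"
  shows "(u * a) $ i = 0"
  unfolding fps_mult_nth using assms by (auto intro!: sum.neutral)

lemma fps_inverse_nth_agree:
  fixes f g :: "'a::field fps"
  assumes f0: "f $ 0 \<noteq> 0" and g0: "g $ 0 \<noteq> 0" and agree: "\<forall>i\<le>n. f $ i = g $ i" and i: "i \<le> n"
  shows "inverse f $ i = inverse g $ i"
proof -
  have "inverse f * (g - f) * inverse g = inverse f * (g * inverse g) - (inverse f * f) * inverse g"
    by (simp add: algebra_simps)
  also have "\<dots> = inverse f - inverse g"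
    using inverse_mult_eq_1[OF f0] inverse_mult_eq_1'[OF g0] by simp
  finally have diff: "inverse f - inverse g = inverse g * (inverse f * (g - f))"
    by (simp add: ac_simps)
  have "\<forall>j\<le>n. (g - f) $ j = 0" using agree by simp
  then have "\<forall>j\<le>n. (inverse f * (g - f)) $ j = 0"
    using fps_mult_nth_vanishing by blast
  then have "(inverse f - inverse g) $ i = 0"
    unfolding diff using fps_mult_nth_vanishing i by blast
  then show ?thesis by simp
qed

section \<open>q-integers, q-factorials and the q-binomials needed\<close>

text \<open>Only \<open>binom(m,0)\<close>, \<open>binom(m,m)\<close>, \<open>binom(m+1,m)\<close> and \<open>binom(m+2,m) = binom(m+2,2)\<close> occur
  with nonzero value along a Motzkin path; they are computed here.\<close>

lemma qint_Suc: "qint (Suc i) = qint i + monom 1 i"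
  by (simp add: qint_def)

lemma poly_qint: "poly (qint i) x = (\<Sum>j<i. x ^ j)"
  by (simp add: qint_def poly_sum poly_monom)

lemma qint_nonzero: "i > 0 \<Longrightarrow> qint i \<noteq> 0"
  using poly_qint[of i 0] by (auto simp: power_0_left)

lemma qfact_0: "qfact 0 = 1"
  by (simp add: qfact_def)

lemma qfact_Suc: "qfact (Suc m) = qfact m * qint (Suc m)"
  by (simp add: qfact_def)

lemma qfact_nonzero: "qfact m \<noteq> 0"
  by (induction m) (auto simp: qfact_0 qfact_Suc qint_nonzero)

lemma qfact_2: "qfact 2 = [:1, 1:]"
  by (simp add: qfact_def qint_def numeral_2_eq_2 monom_Suc one_pCons)

text \<open>The q-analogue of the triangular number \<open>binom(m+1,2)\<close>: \<open>qtri m = \<Sum>j<m. q\<^sup>j [j+1]\<^sub>q\<close>.\<close>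
fun qtri :: "nat \<Rightarrow> complex poly" where
  "qtri 0 = 0"
| "qtri (Suc m) = qtri m + monom 1 m * qint (Suc m)"

lemma qtri_times_qint2: "qtri m * [:1, 1:] = qint m * qint (Suc m)"
proof (induction m)
  case 0
  then show ?case by (simp add: qint_def)
next
  case (Suc m)
  define Q where "Q = qint (Suc m)"
  have step: "monom 1 m * [:1, 1:] = monom 1 m + (monom 1 (Suc m) :: complex poly)"
    by (simp add: monom_Suc one_pCons)
  have "qtri (Suc m) * [:1, 1:] = qtri m * [:1, 1:] + Q * (monom 1 m * [:1, 1:])"
    by (simp add: Q_def algebra_simps del: qtri.simps(1))
  also have "\<dots> = Q * (qint m + monom 1 m + monom 1 (Suc m))"
    unfolding Suc step Q_def by (simp add: algebra_simps)
  also have "\<dots> = Q * qint (Suc (Suc m))"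
    by (simp add: qint_Suc)
  finally show ?case by (simp add: Q_def)
qed

lemma qfact_Suc_Suc: "qfact (Suc (Suc m)) = qfact m * qfact 2 * qtri (Suc m)"
proof -
  have "qfact (Suc (Suc m)) = qfact m * (qint (Suc m) * qint (Suc (Suc m)))"
    by (simp add: qfact_Suc mult.assoc)
  also have "qint (Suc m) * qint (Suc (Suc m)) = qtri (Suc m) * qfact 2"
    by (simp only: qtri_times_qint2 qfact_2)
  finally show ?thesis by (simp add: ac_simps)
qed

lemma qbinom_0: "qbinom m 0 = 1"
  by (simp add: qbinom_def qfact_0 qfact_nonzero)

lemma qbinom_self: "qbinom m m = 1"
  by (simp add: qbinom_def qfact_0 qfact_nonzero)

lemma qbinom_greater: "k > m \<Longrightarrow> qbinom m k = 0"
  by (simp add: qbinom_def)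

lemma qbinom_Suc_self: "qbinom (Suc m) m = qint (Suc m)"
  by (simp add: qbinom_def qfact_Suc qfact_nonzero qfact_0 Suc_diff_le qint_def)

lemma qbinom_Suc_Suc_self: "qbinom (Suc (Suc m)) m = qtri (Suc m)"
proof -
  have "Suc (Suc m) - m = 2" by simp
  then show ?thesis
    unfolding qbinom_def by (simp add: qfact_Suc_Suc qfact_nonzero mult.assoc del: qtri.simps)
qed

lemma qbinom_Suc_Suc_2: "qbinom (Suc (Suc m)) 2 = qtri (Suc m)"
proof -
  have "Suc (Suc m) - 2 = m" by simp
  then show ?thesis
    unfolding qbinom_def
    by (simp add: qfact_Suc_Suc qfact_nonzero mult.assoc mult.commute[of "qfact 2"] del: qtri.simps)
qed

lemma poly_qint_inverse:
  assumes "q \<noteq> 0" "i \<ge> 1"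
  shows "q ^ (i - 1) * poly (qint i) (inverse q) = poly (qint i) q"
proof -
  have "q ^ (i - 1) * poly (qint i) (inverse q) = (\<Sum>j<i. q ^ (i - 1) * inverse q ^ j)"
    by (simp add: poly_qint sum_distrib_left)
  also have "\<dots> = (\<Sum>j<i. q ^ (i - Suc j))"
  proof (rule sum.cong)
    fix j assume "j \<in> {..<i}"
    then have "q ^ (i - 1) = q ^ (i - Suc j) * q ^ j"
      by (simp flip: power_add)
    then show "q ^ (i - 1) * inverse q ^ j = q ^ (i - Suc j)"
      using assms(1) by (simp add: power_inverse field_simps)
  qed simp
  also have "\<dots> = (\<Sum>j<i. q ^ j)"
    by (rule sum.nat_diff_reindex)
  finally show ?thesis by (simp add: poly_qint)
qed

lemma poly_qtri_times: "poly (qtri m) y * (1 + y) = poly (qint m) y * poly (qint (Suc m)) y"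
  using arg_cong[OF qtri_times_qint2, of "\<lambda>p. poly p y" m] by (simp add: algebra_simps)

text \<open>Palindromicity of \<open>binom(m+1,2)\<^sub>q\<close>, of degree \<open>2m-2\<close>; it follows from the identity above
  after dividing by \<open>1+q\<close>, the case \<open>q = -1\<close> being trivial.\<close>
lemma poly_qtri_inverse:
  assumes q: "q \<noteq> 0" and m: "m \<ge> 1"
  shows "q ^ (2 * m - 2) * poly (qtri m) (inverse q) = poly (qtri m) q"
proof (cases "q = -1")
  case True
  then show ?thesis by (simp add: neg_one_even_power)
next
  case False
  have a: "q ^ (m - 1) * poly (qint m) (inverse q) = poly (qint m) q"
    using poly_qint_inverse[OF q m] .
  have b: "q ^ m * poly (qint (Suc m)) (inverse q) = poly (qint (Suc m)) q"
    using poly_qint_inverse[OF q, of "Suc m"] by simp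
  have "(m - 1) + m = Suc (2 * m - 2)"
    using m by simp
  then have "q ^ (m - 1) * q ^ m = q ^ (2 * m - 2) * q"
    by (metis power_add power_Suc2)
  then have "q ^ (2 * m - 2) * poly (qtri m) (inverse q) * (1 + q)
      = q ^ (m - 1) * q ^ m * (poly (qtri m) (inverse q) * (1 + inverse q))"
    using q by (simp add: field_simps)
  also have "\<dots> = (q ^ (m - 1) * poly (qint m) (inverse q)) * (q ^ m * poly (qint (Suc m)) (inverse q))"
    unfolding poly_qtri_times by (simp only: ac_simps)
  also have "\<dots> = poly (qtri m) q * (1 + q)"
    unfolding a b by (simp add: poly_qtri_times)
  finally show ?thesis
    using False by (metis add_eq_0_iff mult_right_cancel add.commute)
qed

section \<open>The step weights\<close>

text \<open>The two q-binomials in the formula for \<open>h\<^sub>n\<close> that involve the neighbours \<open>a = f k\<close> and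
  \<open>b = f (k+1)\<close>; \<open>binom_pair_degree a b\<close> is the degree of this polynomial whenever it is
  nonzero, i.e. whenever \<open>|a - b| \<le> 1\<close>.\<close>
definition binom_pair :: "complex \<Rightarrow> nat \<Rightarrow> nat \<Rightarrow> complex" where
  "binom_pair x a b = poly (qbinom (1 + a) b) x * poly (qbinom (1 + b) a) x"

definition binom_pair_degree :: "nat \<Rightarrow> nat \<Rightarrow> int" where
  "binom_pair_degree a b = int b * (1 + int a - int b) + int a * (1 + int b - int a)"

definition step_weight :: "complex \<Rightarrow> nat \<Rightarrow> nat \<Rightarrow> complex" where
  "step_weight q a b = q powi (int b * (int b - int a)) * binom_pair q a b"

lemma power_int_minus_of_nat: "(q::complex) \<noteq> 0 \<Longrightarrow> q powi (- int n) = inverse (q ^ n)"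
  by (simp add: power_int_minus)

text \<open>Reversal \<open>q \<mapsto> q\<inverse>\<close> of the binomial pair, from palindromicity of its factors.\<close>
lemma binom_pair_inverse:
  assumes q: "q \<noteq> 0"
  shows "binom_pair (inverse q) a b = q powi (- binom_pair_degree a b) * binom_pair q a b"
proof -
  have up: "binom_pair (inverse q) a (Suc a) = q powi (- binom_pair_degree a (Suc a)) * binom_pair q a (Suc a)"
    for a
  proof -
    have "binom_pair_degree a (Suc a) = int (2 * a)"
      by (simp add: binom_pair_degree_def algebra_simps)
    then have "q powi (- binom_pair_degree a (Suc a)) = inverse (q ^ (2 * a))"
      by (simp only:) (rule power_int_minus_of_nat[OF q])
    moreover have "q ^ (2 * a) * poly (qtri (Suc a)) (inverse q) = poly (qtri (Suc a)) q"
      using poly_qtri_inverse[OF q, of "Suc a"] by simp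
    moreover have "binom_pair x a (Suc a) = poly (qtri (Suc a)) x" for x
      by (simp add: binom_pair_def qbinom_self qbinom_Suc_Suc_self del: qtri.simps)
    ultimately show ?thesis
      using q by (simp only:) (simp add: field_simps del: qtri.simps)
  qed
  consider "b = Suc a" | "a = Suc b" | "b = a" | "Suc a < b \<or> Suc b < a"
    by linarith
  then show ?thesis
  proof cases
    case 1
    then show ?thesis using up by simp
  next
    case 2
    then show ?thesis
      using up[of b] by (simp add: binom_pair_def binom_pair_degree_def mult.commute)
  next
    case 3
    have "binom_pair_degree a a = int (2 * a)"
      by (simp add: binom_pair_degree_def)
    then have "q powi (- binom_pair_degree a a) = inverse (q ^ (2 * a))"
      by (simp only:) (rule power_int_minus_of_nat[OF q])
    moreover have "q ^ a * poly (qint (Suc a)) (inverse q) = poly (qint (Suc a)) q"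
      using poly_qint_inverse[OF q, of "Suc a"] by simp
    then have "q ^ (2 * a) * (poly (qint (Suc a)) (inverse q))\<^sup>2 = (poly (qint (Suc a)) q)\<^sup>2"
      by (metis power_mult_distrib power_mult mult.commute)
    moreover have "binom_pair x a a = (poly (qint (Suc a)) x)\<^sup>2" for x
      by (simp add: binom_pair_def qbinom_Suc_self power2_eq_square)
    ultimately show ?thesis
      using 3 q by (simp only:) (simp add: field_simps)
  next
    case 4
    then show ?thesis by (auto simp: binom_pair_def qbinom_greater)
  qed
qed

lemma step_weight_far: "Suc a < b \<or> Suc b < a \<Longrightarrow> step_weight q a b = 0"
  by (auto simp: step_weight_def binom_pair_def qbinom_greater)

lemma step_weight_level: "step_weight q a a = (poly (qint (Suc a)) q)\<^sup>2"
  by (simp add: step_weight_def binom_pair_def qbinom_Suc_self power2_eq_square)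

lemma step_weight_up: "step_weight q a (Suc a) = q ^ Suc a * poly (qtri (Suc a)) q"
proof -
  have "int (Suc a) * (int (Suc a) - int a) = int (Suc a)" by simp
  then have "q powi (int (Suc a) * (int (Suc a) - int a)) = q ^ Suc a"
    by (simp only: power_int_of_nat)
  then show ?thesis
    by (simp add: step_weight_def binom_pair_def qbinom_self qbinom_Suc_Suc_self del: qtri.simps)
qed

lemma step_weight_down:
  assumes "q \<noteq> 0"
  shows "step_weight q (Suc a) a = inverse (q ^ a) * poly (qtri (Suc a)) q"
proof -
  have "int a * (int a - int (Suc a)) = - int a" by simp
  then have "q powi (int a * (int a - int (Suc a))) = inverse (q ^ a)"
    by (subst \<open>_ = - int a\<close>) (rule power_int_minus_of_nat[OF assms])
  then show ?thesis
    by (simp add: step_weight_def binom_pair_def qbinom_self qbinom_Suc_Suc_self del: qtri.simps)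
qed

lemma cfc_odd: "cfc (Suc (2 * l)) q = poly (qtri (Suc l)) q"
proof -
  have "(Suc (2 * l) + 1) div 2 + 1 = Suc (Suc l)" by simp
  then show ?thesis by (simp add: cfc_def qbinom_Suc_Suc_2 del: qtri.simps)
qed

lemma cfc_even: "cfc (2 * l) q = q * poly (qtri l) q"
proof (cases l)
  case 0
  then show ?thesis by (simp add: cfc_def qbinom_greater)
next
  case (Suc l')
  have "2 * l div 2 + 1 = Suc (Suc l')" using Suc by simp
  then show ?thesis using Suc by (simp add: cfc_def qbinom_Suc_Suc_2 del: qtri.simps)
qed

lemma cfc_0: "cfc 0 q = 0"
  using cfc_even[of 0 q] by simp

text \<open>The level weights are the sums \<open>c_2l + c_2l+1\<close>, by \<open>q binom(l+1,2) + binom(l+2,2) = [l+1]\<^sup>2\<close>.\<close>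
lemma step_weight_level_cfc: "step_weight q l l = cfc (2 * l) q + cfc (Suc (2 * l)) q"
proof -
  have split: "poly (qtri (Suc l)) q = poly (qtri l) q + q ^ l * poly (qint (Suc l)) q"
    by (simp add: poly_monom)
  have qint: "poly (qint (Suc l)) q = poly (qint l) q + q ^ l"
    by (simp add: qint_Suc poly_monom)
  have "cfc (2 * l) q + cfc (Suc (2 * l)) q
      = poly (qtri l) q * (1 + q) + q ^ l * poly (qint (Suc l)) q"
    unfolding cfc_even cfc_odd split by (simp add: algebra_simps)
  also have "\<dots> = (poly (qint l) q + q ^ l) * poly (qint (Suc l)) q"
    unfolding poly_qtri_times by (simp add: algebra_simps)
  also have "\<dots> = (poly (qint (Suc l)) q)\<^sup>2"
    unfolding qint[symmetric] by (simp add: power2_eq_square)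
  finally show ?thesis by (simp add: step_weight_level)
qed

lemma step_weight_loop_cfc:
  assumes "q \<noteq> 0"
  shows "step_weight q (Suc l) l * step_weight q l (Suc l) = cfc (Suc (2 * l)) q * cfc (Suc (Suc (2 * l))) q"
proof -
  have "cfc (Suc (Suc (2 * l))) q = q * poly (qtri (Suc l)) q"
    using cfc_even[of "Suc l" q] by simp
  then show ?thesis
    unfolding step_weight_down[OF assms] step_weight_up cfc_odd
    using assms by (simp add: field_simps del: qtri.simps)
qed

section \<open>The reversed Poincare polynomial as a weighted Motzkin path sum\<close>

lemma prod_power_int:
  fixes x :: "'a::field"
  assumes "x \<noteq> 0"
  shows "(\<Prod>k\<in>A. x powi g k) = x powi (\<Sum>k\<in>A. g k)"
proof (induction A rule: infinite_finite_induct)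
  case (insert k F)
  then show ?case using assms by (simp add: power_int_add)
qed simp_all

lemma sum_atLeast1_eq_lessThan:
  fixes g :: "nat \<Rightarrow> 'a::comm_monoid_add"
  assumes "g 0 = 0"
  shows "(\<Sum>k=1..n-1. g k) = (\<Sum>k<n. g k)"
proof (cases n)
  case (Suc m)
  have "(\<Sum>k=1..n-1. g k) = (\<Sum>k<m. g (Suc k))"
    using Suc by (simp add: sum.atLeast1_atMost_eq)
  also have "\<dots> = (\<Sum>k<n. g k)"
    using Suc assms by (simp add: sum.lessThan_Suc_shift del: sum.lessThan_Suc)
  finally show ?thesis .
qed simp

text \<open>The exponents match: for a path with \<open>f 0 = 0\<close>, the degree \<open>n(n-1)/2\<close> of \<open>h\<^sub>n\<close> minus the
  exponent of q in the summand, minus the degrees of the q-binomials, telescopes to the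
  exponents \<open>f(k+1)(f(k+1) - f k)\<close> in the step weights, up to the boundary term \<open>-n f(n)\<close>.\<close>
lemma exponent_telescope:
  assumes "f 0 = 0"
  shows "(\<Sum>k<n. int k) - (\<Sum>k<n. (int k - int (f k)) * (1 - int (f k) + int (f (Suc k))))
     - (\<Sum>k<n. binom_pair_degree (f k) (f (Suc k)))
     - (\<Sum>k<n. int (f (Suc k)) * (int (f (Suc k)) - int (f k)))
     = - int n * int (f n)"
  using assms by (induction n) (simp_all add: binom_pair_degree_def algebra_simps)

lemma qbinom_products_as_steps:
  assumes f0: "f 0 = 0" and fn: "f n = 0"
  shows "(\<Prod>k=1..n-1. poly (qbinom (1 + f (k - 1)) (f k)) x) * (\<Prod>k=1..n-1. poly (qbinom (1 + f (k + 1)) (f k)) x)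
     = (\<Prod>k<n. binom_pair x (f k) (f (Suc k)))"
proof (cases n)
  case 0
  then show ?thesis by simp
next
  case (Suc m)
  have left: "(\<Prod>k=1..n-1. poly (qbinom (1 + f (k - 1)) (f k)) x) = (\<Prod>k<n. poly (qbinom (1 + f k) (f (Suc k))) x)"
    using Suc fn by (simp add: prod.atLeast1_atMost_eq qbinom_0)
  have right: "(\<Prod>k=1..n-1. poly (qbinom (1 + f (k + 1)) (f k)) x) = (\<Prod>k<n. poly (qbinom (1 + f (Suc k)) (f k)) x)"
    using Suc f0 by (simp add: prod.atLeast1_atMost_eq qbinom_0 prod.lessThan_Suc_shift del: prod.lessThan_Suc)
  show ?thesis
    unfolding left right binom_pair_def by (simp add: prod.distrib)
qed

lemma reversed_summand:
  assumes q: "q \<noteq> 0" and f0: "f 0 = 0" and fn: "f n = 0"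
  shows "q ^ (n * (n - 1) div 2) * (inverse q powi (\<Sum>k=1..n-1. (int k - int (f k)) * (1 - int (f k) + int (f (k + 1))))
      * (\<Prod>k=1..n-1. poly (qbinom (1 + f (k - 1)) (f k)) (inverse q))
      * (\<Prod>k=1..n-1. poly (qbinom (1 + f (k + 1)) (f k)) (inverse q)))
    = path_weight (step_weight q) n f"
proof -
  define S where "S = (\<Sum>k<n. int k)"
  define E where "E = (\<Sum>k<n. (int k - int (f k)) * (1 - int (f k) + int (f (Suc k))))"
  define D where "D = (\<Sum>k<n. binom_pair_degree (f k) (f (Suc k)))"
  define P where "P = (\<Sum>k<n. int (f (Suc k)) * (int (f (Suc k)) - int (f k)))"
  have "S + (- E + - D) = P"
    using exponent_telescope[of f n, OF f0] fn by (simp add: S_def E_def D_def P_def)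
  then have exponents: "q powi S * (q powi (- E) * q powi (- D)) = q powi P"
    using q by (simp flip: power_int_add)
  have "q ^ (n * (n - 1) div 2) = q powi S"
  proof -
    have "n * (n - 1) div 2 = \<Sum>{0..<n}" by (simp add: Sum_Ico_nat)
    then have "int (n * (n - 1) div 2) = S" unfolding S_def by (simp add: atLeast0LessThan)
    then show ?thesis by (metis power_int_of_nat)
  qed
  moreover have "inverse q powi (\<Sum>k=1..n-1. (int k - int (f k)) * (1 - int (f k) + int (f (k + 1)))) = q powi (- E)"
    unfolding E_def by (subst sum_atLeast1_eq_lessThan) (simp_all add: f0 power_int_inverse power_int_minus)
  moreover have "(\<Prod>k<n. binom_pair (inverse q) (f k) (f (Suc k))) = q powi (- D) * (\<Prod>k<n. binom_pair q (f k) (f (Suc k)))"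
    unfolding D_def using q by (simp add: binom_pair_inverse prod.distrib prod_power_int sum_negf)
  moreover have "path_weight (step_weight q) n f = q powi P * (\<Prod>k<n. binom_pair q (f k) (f (Suc k)))"
    unfolding P_def path_weight_def step_weight_def using q by (simp add: prod.distrib prod_power_int)
  ultimately show ?thesis
    unfolding mult.assoc qbinom_products_as_steps[OF f0 fn] exponents[symmetric]
    by (simp add: ac_simps)
qed

lemma fset_eq_paths: "fset n = {f \<in> paths n n. f n = 0}"
  unfolding fset_def paths_def by (cases n) (auto, (metis Suc_lessI not_less0 neq0_conv)+)

lemma htilde_path_sum:
  assumes "q \<noteq> 0"
  shows "htilde n q = path_sum (step_weight q) n n 0"
proof -
  have "htilde n q = (\<Sum>f\<in>fset n. path_weight (step_weight q) n f)"
    unfolding htilde_def h_def sum_distrib_left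
  proof (rule sum.cong)
    fix f assume "f \<in> fset n"
    then have "f 0 = 0" "f n = 0"
      unfolding fset_def by (cases n; auto)+
    then show "q ^ (n * (n - 1) div 2) * (inverse q powi (\<Sum>k=1..n-1. (int k - int (f k)) * (1 - int (f k) + int (f (k + 1))))
      * (\<Prod>k=1..n-1. poly (qbinom (1 + f (k - 1)) (f k)) (inverse q))
      * (\<Prod>k=1..n-1. poly (qbinom (1 + f (k + 1)) (f k)) (inverse q))) = path_weight (step_weight q) n f"
      by (rule reversed_summand[OF assms])
  qed simp
  then show ?thesis
    by (simp add: path_sum_def fset_eq_paths)
qed

lemma tridiagonal_step_weight: "tridiagonal (step_weight q)"
  unfolding tridiagonal_def using step_weight_far by blast

lemma cf_nth:
  "i \<le> N \<Longrightarrow> cf q k N $ i = stieltjes (\<lambda>j. cfc j q) k $ i"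
proof (induction N arbitrary: k i)
  case 0
  then show ?case by (simp add: stieltjes_def)
next
  case (Suc N)
  define c where "c = fps_const (cfc k q)"
  have agree: "\<forall>j\<le>Suc N. (1 - c * fps_X * cf q (Suc k) N) $ j
      = (1 - c * fps_X * stieltjes (\<lambda>j. cfc j q) (Suc k)) $ j"
    using Suc.IH by (auto simp: c_def mult.assoc)
  have "cf q k (Suc N) $ i = inverse (1 - c * fps_X * cf q (Suc k) N) $ i"
    by (simp add: c_def)
  also have "\<dots> = inverse (1 - c * fps_X * stieltjes (\<lambda>j. cfc j q) (Suc k)) $ i"
    by (rule fps_inverse_nth_agree[OF _ _ agree Suc.prems]) (simp_all add: c_def mult.assoc)
  also have "\<dots> = stieltjes (\<lambda>j. cfc j q) k $ i"
    using stieltjes_inverse[of "\<lambda>j. cfc j q" k] by (simp add: c_def)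
  finally show ?case .
qed

theorem mainTheorem3:
  fixes q :: complex
  assumes "q \<noteq> 0"
  shows "(\<lambda>N. cf q 1 N) \<longlonglongrightarrow> Abs_fps (\<lambda>n. htilde n q)"
proof (rule tendsto_fpsI)
  fix n
  let ?c = "\<lambda>j. cfc j q"
  have "motzkin (step_weight q) 0 = stieltjes ?c 0 * stieltjes ?c 1"
    using motzkin_eq_stieltjes[of "step_weight q" ?c 0]
    by (simp add: step_weight_level_cfc step_weight_loop_cfc[OF assms])
  also have "\<dots> = stieltjes ?c 1"
    by (simp add: stieltjes_start cfc_0)
  finally have "htilde n q = stieltjes ?c 1 $ n"
    using htilde_path_sum[OF assms] path_sum_eq_walk[OF tridiagonal_step_weight, of n n 0 q]
    by (simp add: motzkin_def fps_eq_iff)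
  then show "\<forall>\<^sub>F N in sequentially. cf q 1 N $ n = Abs_fps (\<lambda>n. htilde n q) $ n"
    using cf_nth[of n _ q 1] by (auto intro: eventually_sequentiallyI[of n])
qed

end
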